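(* Let $r,k\in\mathbb Z$ with $0\le k\le r$ and suppose Assumption (A1) holds. Then for every $\hat v\in C^{k_{\mathcal J}+1}([-1,1])$ the conditions (J1)–(J3) below determine a unique polynomial $\widehat{\mathcal J}\hat v\in P_r([-1,1])$, i.e. $\widehat{\mathcal J}$ is well defined. Moreover, if $\widehat{\mathcal I}$ preserves polynomials up to degree $\tilde r$ (i.e. $\widehat{\mathcal I}p=p$ for all $p\in P_{\tilde r}([-1,1])$), then $\widehat{\mathcal J}$ preserves polynomials up to degree $\min\{\tilde r+1,r\}$.
   Context: $P_s(J)$ denotes polynomials of degree at most $s$ on $J$; $\delta_{i,j}$ is the Kronecker symbol; $\lfloor\cdot\rfloor$ is the floor function (so $\lfloor (k-1)/2\rfloor=-1$ for $k=0$); sums with upper limit below the lower limit are empty. $\widehat{\mathscr I}$ is a linear functional (the reference integrator) and $\widehat{\mathcal I}$ a linear operator (the reference approximation operator); $k_{\mathscr I}\ge0$ and $k_{\mathcal I}\ge0$ are the smallest integers such that $\widehat{\mathscr I}$ is well defined on $C^{k_{\mathscr I}}([-1,1])$ and $\widehat{\mathcal I}$ is well defined on $C^{k_{\mathcal I}}([-1,1])$; moreover $\widehat{\mathcal I}\hat v\in C^{l}([-1,1])$ whenever $\hat v\in C^{\max\{k_{\mathcal I},l\}}([-1,1])$. Set $k_{\mathcal J}:=\max\{\lfloor k/2\rfloor-1,k_{\mathscr I},k_{\mathcal I}\}$. Assumption (A1): whenever $\hat\psi\in P_{r-\max\{1,k\}}([-1,1])$ satisfies $\widehat{\mathscr I}\big[(1-\hat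 t)^{\lfloor k/2\rfloor}(1+\hat t)^{|\lfloor (k-1)/2\rfloor|}\hat\psi\,\hat\varphi\big]=0$ for all $\hat\varphi\in P_{r-\max\{1,k\}}([-1,1])$, then $\hat\psi\equiv0$. Definition of $\widehat{\mathcal J}\hat v\in P_r([-1,1])$: (J1) if $k\ge1$: $(\widehat{\mathcal J}\hat v)^{(i)}(-1)=\hat v^{(i)}(-1)$ for $i=0,\dots,\lfloor (k-1)/2\rfloor$; (J2) if $k\ge2$: $(\widehat{\mathcal J}\hat v)^{(i)}(1)=\hat v^{(i)}(1)$ for $i=1,\dots,\lfloor k/2\rfloor$; (J3) $\widehat{\mathscr I}[(\widehat{\mathcal J}\hat v)'\hat\varphi]+\delta_{0,k}(\widehat{\mathcal J}\hat v)(-1)\hat\varphi(-1)=\widehat{\mathscr I}[(\widehat{\mathcal I}(\hat v'))\hat\varphi]+\delta_{0,k}\hat v(-1)\hat\varphi(-1)$ for all $\hat\varphi\in P_{r-k}([-1,1])$. *)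

theory Defs
  imports "HOL-Analysis.Analysis" "HOL-Computational_Algebra.Polynomial"
begin

definition cderiv :: "(real \<Rightarrow> real) \<Rightarrow> real \<Rightarrow> real" where
  "cderiv f = (\<lambda>x. vector_derivative f (at x within {-1..1}))"

definition cdiff :: "nat \<Rightarrow> (real \<Rightarrow> real) \<Rightarrow> real \<Rightarrow> real" where
  "cdiff n f = (cderiv ^^ n) f"

definition Ck :: "nat \<Rightarrow> (real \<Rightarrow> real) \<Rightarrow> bool" where
  "Ck k f \<longleftrightarrow>
     (\<forall>i\<le>k. continuous_on {-1..1} (cdiff i f)) \<and>
     (\<forall>i<k. \<forall>x\<in>{-1..1}. (cdiff i f has_real_derivative cdiff (Suc i) f x) (at x within {-1..1}))"

definition inP :: "int \<Rightarrow> real poly \<Rightarrow> bool" where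
  "inP s p \<longleftrightarrow> (if s < 0 then p = 0 else int (degree p) \<le> s)"

text \<open>The exponent |floor((k-1)/2)| (equal to 1 for k = 0).\<close>
definition absfl :: "nat \<Rightarrow> nat" where
  "absfl k = (if k = 0 then 1 else (k - 1) div 2)"

definition A1 :: "nat \<Rightarrow> nat \<Rightarrow> ((real \<Rightarrow> real) \<Rightarrow> real) \<Rightarrow> bool" where
  "A1 r k Iscr \<longleftrightarrow>
     (\<forall>\<psi>. inP (int r - int (max 1 k)) \<psi> \<longrightarrow>
        (\<forall>\<phi>. inP (int r - int (max 1 k)) \<phi> \<longrightarrow>
            Iscr (\<lambda>t. (1 - t) ^ (k div 2) * (1 + t) ^ absfl k * poly \<psi> t * poly \<phi> t) = 0)
        \<longrightarrow> \<psi> = 0)"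

definition J_conds :: "nat \<Rightarrow> nat \<Rightarrow> ((real \<Rightarrow> real) \<Rightarrow> real) \<Rightarrow>
    ((real \<Rightarrow> real) \<Rightarrow> (real \<Rightarrow> real)) \<Rightarrow> (real \<Rightarrow> real) \<Rightarrow> real poly \<Rightarrow> bool" where
  "J_conds r k Iscr Ical v q \<longleftrightarrow>
     (1 \<le> k \<longrightarrow> (\<forall>i\<le>(k - 1) div 2. poly ((pderiv ^^ i) q) (-1) = cdiff i v (-1))) \<and>
     (2 \<le> k \<longrightarrow> (\<forall>i\<in>{1..k div 2}. poly ((pderiv ^^ i) q) 1 = cdiff i v 1)) \<and>
     (\<forall>\<phi>. inP (int r - int k) \<phi> \<longrightarrow>
        Iscr (\<lambda>t. poly (pderiv q) t * poly \<phi> t)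
          + (if k = 0 then poly q (-1) * poly \<phi> (-1) else 0)
        = Iscr (\<lambda>t. Ical (cdiff 1 v) t * poly \<phi> t)
          + (if k = 0 then v (-1) * poly \<phi> (-1) else 0))"

definition Jhat :: "nat \<Rightarrow> nat \<Rightarrow> ((real \<Rightarrow> real) \<Rightarrow> real) \<Rightarrow>
    ((real \<Rightarrow> real) \<Rightarrow> (real \<Rightarrow> real)) \<Rightarrow> (real \<Rightarrow> real) \<Rightarrow> real poly" where
  "Jhat r k Iscr Ical v = (THE q. degree q \<le> r \<and> J_conds r k Iscr Ical v q)"

end

theory Submission
  imports Defs
begin

text \<open>
  Conditions (J1)-(J3) are (k + 1) div 2 + k div 2 + (r - k + 1) = r + 1 linear equations for
  q in P_r, so they determine q uniquely as soon as the homogeneous system has only the trivial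
  solution. If q solves it, the vanishing derivatives at -1 and 1 give
  q' = (1 - t)^(k div 2) (1 + t)^((k - 1) div 2) \<psi> with \<psi> in P_(r-k), and the homogeneous (J3)
  is exactly the hypothesis of (A1) for \<psi>; hence q' = 0, and q(-1) = 0 gives q = 0.
  For k = 0 one tests (J3) with (1 + t) \<phi> to reach (A1), and then with 1 to get q(-1) = 0.
  If I-hat reproduces p', then p itself satisfies (J1)-(J3), so J-hat reproduces p.
\<close>

section \<open>Smooth functions on the reference interval\<close>

lemma cdiff_0 [simp]: "cdiff 0 f = f"
  by (simp add: cdiff_def)

lemma cdiff_Suc: "cdiff (Suc i) f = cderiv (cdiff i f)"
  by (simp add: cdiff_def)

lemma cdiff_cdiff_1: "cdiff i (cdiff 1 f) = cdiff (Suc i) f"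
  by (simp add: cdiff_def funpow_Suc_right del: funpow.simps)

lemma Ck_derivative_chain:
  assumes g0: "\<forall>x\<in>{-1..1}. g 0 x = f x"
    and gc: "\<forall>i\<le>n. continuous_on {-1..1} (g i)"
    and gd: "\<forall>i<n. \<forall>x\<in>{-1..1}. (g i has_real_derivative g (Suc i) x) (at x within {-1..1})"
  shows "Ck n f \<and> (\<forall>i\<le>n. \<forall>x\<in>{-1..1}. cdiff i f x = g i x)"
proof -
  have deriv: "(cdiff i f has_real_derivative g (Suc i) x) (at x within {-1..1})"
    if "i < n" "x \<in> {-1..1}" "\<forall>y\<in>{-1..1}. cdiff i f y = g i y" for i x
    using has_field_derivative_transform_within[where d=1, OF gd[rule_format, OF that(1,2)] _ that(2)] that(3)
    by simp
  have eq: "\<forall>x\<in>{-1..1}. cdiff i f x = g i x" if "i \<le> n" for i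
    using that
  proof (induction i)
    case 0
    then show ?case using g0 by simp
  next
    case (Suc i)
    show ?case
    proof
      fix x :: real
      assume x: "x \<in> {-1..1}"
      have "(cdiff i f has_real_derivative g (Suc i) x) (at x within {-1..1})"
        using Suc x by (intro deriv) auto
      then have "vector_derivative (cdiff i f) (at x within {-1..1}) = g (Suc i) x"
        using x by (intro vector_derivative_within_closed_interval)
          (auto simp: has_real_derivative_iff_has_vector_derivative)
      then show "cdiff (Suc i) f x = g (Suc i) x"
        by (simp add: cdiff_Suc cderiv_def)
    qed
  qed
  have "Ck n f"
    unfolding Ck_def
  proof (intro conjI allI impI ballI)
    fix i
    assume "i \<le> n"
    then show "continuous_on {-1..1} (cdiff i f)"
      using continuous_on_eq gc eq by (metis (no_types, lifting))
  next
    fix i x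
    assume "i < n" and "x \<in> {-1..(1::real)}"
    then show "(cdiff i f has_real_derivative cdiff (Suc i) f x) (at x within {-1..1})"
      using deriv eq[of i] eq[of "Suc i"] by simp
  qed
  with eq show ?thesis by blast
qed

lemma Ck_mono: "Ck n f \<Longrightarrow> m \<le> n \<Longrightarrow> Ck m f"
  unfolding Ck_def by auto

lemma Ck_cdiff_1: "Ck (Suc n) f \<Longrightarrow> Ck n (cdiff 1 f)"
  unfolding Ck_def cdiff_cdiff_1 by auto

lemma Ck_poly_and_cdiff_poly:
  "Ck n (poly p) \<and> (\<forall>i\<le>n. \<forall>x\<in>{-1..1}. cdiff i (poly p) x = poly ((pderiv ^^ i) p) x)"
  by (rule Ck_derivative_chain)
    (auto intro!: continuous_intros has_field_derivative_at_within[OF poly_DERIV])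

lemma Ck_poly: "Ck n (poly p)"
  using Ck_poly_and_cdiff_poly by blast

lemma cdiff_poly: "x \<in> {-1..1} \<Longrightarrow> cdiff i (poly p) x = poly ((pderiv ^^ i) p) x"
  using Ck_poly_and_cdiff_poly[of i p] by auto

lemma Ck_linear_combination:
  assumes f: "Ck n f" and g: "Ck n g"
  shows "Ck n (\<lambda>x. a * f x + b * g x)"
proof -
  let ?G = "\<lambda>i x. a * cdiff i f x + b * cdiff i g x"
  have "\<forall>i\<le>n. continuous_on {-1..1} (?G i)"
    using f g unfolding Ck_def by (auto intro!: continuous_intros)
  moreover have "\<forall>i<n. \<forall>x\<in>{-1..1}. (?G i has_real_derivative ?G (Suc i) x) (at x within {-1..1})"
    using f g unfolding Ck_def by (auto intro!: DERIV_add DERIV_cmult)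
  ultimately show ?thesis
    using Ck_derivative_chain[of ?G "\<lambda>x. a * f x + b * g x" n] by auto
qed

lemma Ck_mult_id:
  assumes f: "Ck n f"
  shows "Ck n (\<lambda>x. f x * x)"
proof -
  let ?G = "\<lambda>i x. x * cdiff i f x + real i * cdiff (i - 1) f x"
  have "\<forall>i\<le>n. continuous_on {-1..1} (?G i)"
    using f unfolding Ck_def by (auto intro!: continuous_intros)
  moreover have "\<forall>i<n. \<forall>x\<in>{-1..1}. (?G i has_real_derivative ?G (Suc i) x) (at x within {-1..1})"
  proof (intro allI impI ballI)
    fix i x
    assume i: "i < n" and x: "x \<in> {-1..(1::real)}"
    have di: "(cdiff j f has_real_derivative cdiff (Suc j) f x) (at x within {-1..1})" if "j \<le> i" for j
      using f i x that unfolding Ck_def by auto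
    show "(?G i has_real_derivative ?G (Suc i) x) (at x within {-1..1})"
    proof (cases i)
      case 0
      then show ?thesis
        using di[of 0] by (auto intro!: derivative_eq_intros simp: algebra_simps)
    next
      case (Suc j)
      then show ?thesis
        using di[of i] di[of j] by (auto intro!: derivative_eq_intros simp: algebra_simps)
    qed
  qed
  ultimately show ?thesis
    using Ck_derivative_chain[of ?G "\<lambda>x. f x * x" n] by (auto simp: mult.commute)
qed

lemma Ck_mult_poly:
  assumes f: "Ck n f"
  shows "Ck n (\<lambda>x. f x * poly p x)"
proof (induction p rule: pCons_induct)
  case 0
  then show ?case
    using Ck_linear_combination[OF f f, of 0 0] by simp
next
  case (pCons a p)
  have "(\<lambda>x. f x * poly (pCons a p) x) = (\<lambda>x. a * f x + 1 * (f x * poly p x * x))"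
    by (auto simp: algebra_simps)
  then show ?case
    using Ck_linear_combination[OF f Ck_mult_id[OF pCons.IH]] by metis
qed

section \<open>Roots of polynomials and their derivatives\<close>

lemma higher_pderiv_Suc: "(pderiv ^^ Suc i) p = (pderiv ^^ i) (pderiv p)"
  by (simp add: funpow_Suc_right del: funpow.simps)

lemma linear_power_dvd_if_higher_pderivs_vanish:
  fixes p :: "'a::field_char_0 poly"
  assumes "\<forall>i<m. poly ((pderiv ^^ i) p) a = 0"
  shows "[:-a, 1:] ^ m dvd p"
  using assms
proof (induction m arbitrary: p)
  case 0
  then show ?case by simp
next
  case (Suc m)
  have root: "poly p a = 0"
    using Suc.prems by (metis funpow_0 zero_less_Suc)
  have "[:-a, 1:] ^ m dvd pderiv p"
    using Suc.prems by (intro Suc.IH) (auto simp flip: higher_pderiv_Suc)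
  then have "pderiv p = 0 \<or> m \<le> order a (pderiv p)"
    by (simp add: order_divides)
  moreover have "p = 0" if "pderiv p = 0"
  proof -
    have "degree p = 0"
      using that by (simp add: pderiv_eq_0_iff)
    then obtain c where "p = [:c:]"
      by (rule degree_eq_zeroE)
    with root show ?thesis
      by simp
  qed
  moreover have "order a p = Suc (order a (pderiv p))" if "p \<noteq> 0"
    using order_pderiv[OF that root] .
  ultimately have "p = 0 \<or> Suc m \<le> order a p"
    by (cases "p = 0") auto
  then show ?case
    by (simp only: order_divides)
qed

lemma linear_powers_mult_dvd:
  fixes p :: "'a::field poly"
  assumes "a \<noteq> c" and a: "[:-a, 1:] ^ m dvd p" and c: "[:-c, 1:] ^ n dvd p"
  shows "[:-a, 1:] ^ m * [:-c, 1:] ^ n dvd p"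
proof (cases "p = 0")
  case False
  obtain g where g: "p = [:-a, 1:] ^ m * g"
    using a by (auto elim: dvdE)
  have "order c ([:-a, 1:] ^ m) = 0"
    using assms(1) by (intro order_0I) simp
  then have "order c p = order c g"
    using False g by (simp add: order_mult)
  then have "[:-c, 1:] ^ n dvd g"
    using False c g by (simp add: order_divides)
  then show ?thesis
    unfolding g by simp
qed simp

lemma pderiv_eq_0_root_imp_eq_0:
  fixes p :: "'a::field_char_0 poly"
  assumes "pderiv p = 0" and "poly p a = 0"
  shows "p = 0"
proof -
  have "degree p = 0"
    using assms(1) by (simp add: pderiv_eq_0_iff)
  then obtain c where "p = [:c:]"
    by (rule degree_eq_zeroE)
  with assms(2) show ?thesis
    by simp
qed

lemma pderiv_factor_by_vanishing_derivatives:
  fixes q :: "real poly"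
  assumes left: "\<forall>i\<in>{1..a}. poly ((pderiv ^^ i) q) (-1) = 0"
    and right: "\<forall>i\<in>{1..b}. poly ((pderiv ^^ i) q) 1 = 0"
  obtains \<psi> where "\<And>t. poly (pderiv q) t = (1 - t) ^ b * (1 + t) ^ a * poly \<psi> t"
    and "\<psi> = 0 \<or> degree (pderiv q) = a + b + degree \<psi>"
proof -
  have "[:-(-1), 1:] ^ a dvd pderiv q"
    using left by (intro linear_power_dvd_if_higher_pderivs_vanish) (auto simp del: funpow.simps simp flip: higher_pderiv_Suc)
  moreover have "[:-1, 1:] ^ b dvd pderiv q"
    using right by (intro linear_power_dvd_if_higher_pderivs_vanish) (auto simp del: funpow.simps simp flip: higher_pderiv_Suc)
  ultimately have "[:-1, 1:] ^ b * [:1, 1:] ^ a dvd pderiv q"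
    using linear_powers_mult_dvd[of 1 "-1" b "pderiv q" a] by simp
  then obtain \<psi> where \<psi>: "pderiv q = [:-1, 1:] ^ b * [:1, 1:] ^ a * \<psi>"
    by (auto elim: dvdE)
  show ?thesis
  proof
    fix t :: real
    have "(t - 1) ^ b = (-1) ^ b * (1 - t) ^ b"
      by (metis minus_diff_eq mult_1 mult_minus_left power_minus)
    then show "poly (pderiv q) t = (1 - t) ^ b * (1 + t) ^ a * poly (smult ((-1) ^ b) \<psi>) t"
      unfolding \<psi> by (simp add: algebra_simps)
    show "smult ((-1) ^ b) \<psi> = 0 \<or> degree (pderiv q) = a + b + degree (smult ((-1) ^ b) \<psi>)"
      unfolding \<psi> by (cases "\<psi> = 0") (simp_all add: degree_mult_eq degree_power_eq)
  qed
qed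

section \<open>Square linear systems on polynomials\<close>

lemma (in vector_space) linear_inj_on_span_imp_surj_on:
  assumes lin: "Vector_Spaces.linear scale scale f" and B: "independent B" "finite B"
    and into: "f ` span B \<subseteq> span B" and inj: "inj_on f (span B)"
  shows "f ` span B = span B"
proof -
  interpret f: Vector_Spaces.linear scale scale f by (fact lin)
  have indep: "independent (f ` B)"
    using f.independent_injective_image[OF B(1) inj] .
  have card: "card (f ` B) = card B"
    using card_image inj_on_subset[OF inj span_superset] by blast
  have "span B \<subseteq> span (f ` B)"
  proof
    fix x
    assume x: "x \<in> span B"
    show "x \<in> span (f ` B)"
    proof (rule ccontr)
      assume "x \<notin> span (f ` B)"
      then have "independent (insert x (f ` B))" and "x \<notin> f ` B"
        using independent_insertI[OF _ indep] span_superset by blast+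
      moreover have "insert x (f ` B) \<subseteq> span B"
        using x into span_superset by blast
      ultimately show False
        using independent_span_bound[OF B(2)] card B(2) by fastforce
    qed
  qed
  with into show ?thesis
    by (simp add: f.span_image)
qed

interpretation poly_vs: vector_space "smult :: 'a::field \<Rightarrow> 'a poly \<Rightarrow> 'a poly"
  by unfold_locales (simp_all add: smult_add_right smult_add_left)

lemma span_monoms: "poly_vs.span (monom 1 ` {..n}) = {p :: 'a::field poly. degree p \<le> n}"
proof (rule poly_vs.span_subspace)
  show "monom 1 ` {..n} \<subseteq> {p :: 'a poly. degree p \<le> n}"
    by (auto simp: degree_monom_eq)
  show "{p :: 'a poly. degree p \<le> n} \<subseteq> poly_vs.span (monom 1 ` {..n})"
  proof
    fix p :: "'a poly"
    assume "p \<in> {p. degree p \<le> n}"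
    then have "p = (\<Sum>j\<le>n. smult (coeff p j) (monom 1 j))"
      using poly_as_sum_of_monoms'[of p n] by (simp add: smult_monom)
    also have "\<dots> \<in> poly_vs.span (monom 1 ` {..n})"
      by (intro poly_vs.span_sum poly_vs.span_scale poly_vs.span_base) auto
    finally show "p \<in> poly_vs.span (monom 1 ` {..n})" .
  qed
  show "poly_vs.subspace {p :: 'a poly. degree p \<le> n}"
    unfolding poly_vs.subspace_def
    by (auto intro: order.trans[OF degree_add_le] order.trans[OF degree_smult_le])
qed

lemma independent_monoms: "poly_vs.independent (monom (1::'a::field) ` A)"
  unfolding poly_vs.independent_explicit_module
proof (intro allI impI)
  fix t u v
  assume t: "finite t" "t \<subseteq> monom (1::'a) ` A"
    and sum: "(\<Sum>v\<in>t. smult (u v) v) = 0" and v: "v \<in> t"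
  obtain i where vi: "v = monom 1 i"
    using t v by auto
  have "coeff (smult (u w) w) i = (if w = v then u w else 0)" if "w \<in> t" for w
    using t that vi by (auto simp: coeff_monom monom_eq_iff')
  then have "coeff (\<Sum>v\<in>t. smult (u v) v) i = (\<Sum>w\<in>t. if w = v then u w else 0)"
    by (simp add: coeff_sum)
  also have "\<dots> = u v"
    using t(1) v by simp
  finally have "coeff (\<Sum>v\<in>t. smult (u v) v) i = u v" .
  with sum show "u v = 0"
    by simp
qed

lemma linear_functional_eq_on_degree_le_iff_monoms:
  fixes F G :: "'a::field poly \<Rightarrow> 'a"
  assumes F: "\<And>a b p q. F (smult a p + smult b q) = a * F p + b * F q"
    and G: "\<And>a b p q. G (smult a p + smult b q) = a * G p + b * G q"
  shows "(\<forall>\<phi>. degree \<phi> \<le> n \<longrightarrow> F \<phi> = G \<phi>) \<longleftrightarrow> (\<forall>j\<le>n. F (monom 1 j) = G (monom 1 j))"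
proof
  assume "\<forall>\<phi>. degree \<phi> \<le> n \<longrightarrow> F \<phi> = G \<phi>"
  then show "\<forall>j\<le>n. F (monom 1 j) = G (monom 1 j)"
    by (metis degree_monom_le le_trans)
next
  assume monoms: "\<forall>j\<le>n. F (monom 1 j) = G (monom 1 j)"
  have "poly_vs.subspace {\<phi>. F \<phi> = G \<phi>}"
    unfolding poly_vs.subspace_def
    using F[of 0 0 0 0] G[of 0 0 0 0] F[of 1 _ 1] G[of 1 _ 1] F[of _ _ 0 0] G[of _ _ 0 0] by simp
  then have "poly_vs.span (monom 1 ` {..n}) \<subseteq> {\<phi>. F \<phi> = G \<phi>}"
    using monoms by (intro poly_vs.span_minimal) auto
  then show "\<forall>\<phi>. degree \<phi> \<le> n \<longrightarrow> F \<phi> = G \<phi>"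
    by (auto simp: span_monoms)
qed

lemma square_linear_system_unique_solution:
  fixes L :: "'i \<Rightarrow> 'a::field poly \<Rightarrow> 'a"
  assumes I: "finite I" "card I = Suc n"
    and lin: "\<And>i a b p q. i \<in> I \<Longrightarrow> L i (smult a p + smult b q) = a * L i p + b * L i q"
    and kernel: "\<And>q. degree q \<le> n \<Longrightarrow> \<forall>i\<in>I. L i q = 0 \<Longrightarrow> q = 0"
  shows "\<exists>!q. degree q \<le> n \<and> (\<forall>i\<in>I. L i q = b i)"
proof -
  have diff: "L i (p - q) = L i p - L i q" if "i \<in> I" for i p q
    using lin[OF that, of 1 p "-1" q] by simp
  have unique: "p = q" if "degree p \<le> n" "degree q \<le> n" "\<forall>i\<in>I. L i p = L i q" for p q
  proof -
    have "p - q = 0"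
      using that by (intro kernel) (simp_all add: degree_diff_le diff)
    then show ?thesis
      by simp
  qed
  obtain e where "bij_betw e {..<card I} I"
    using finite_same_card_bij[of "{..<card I}" I] I(1) by auto
  then have e: "e ` {..n} = I"
    using I(2) by (simp add: bij_betw_def lessThan_Suc_atMost)
  then have eI: "e j \<in> I" if "j \<le> n" for j
    using that by blast
  \<comment> \<open>T q encodes the vector of values L i q as a coefficient list\<close>
  define T where "T q = (\<Sum>j\<le>n. monom (L (e j) q) j)" for q
  have coeff_T: "coeff (T q) j = (if j \<le> n then L (e j) q else 0)" for q j
    unfolding T_def coeff_sum by (simp add: coeff_monom if_distrib cong: if_cong)
  have "T p = T q \<longleftrightarrow> (\<forall>j\<le>n. L (e j) p = L (e j) q)" for p q
    by (auto simp: poly_eq_iff coeff_T)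
  then have T_eq_iff: "T p = T q \<longleftrightarrow> (\<forall>i\<in>I. L i p = L i q)" for p q
    unfolding e[symmetric] by auto
  have "T (p + q) = T p + T q" for p q
    using lin[of _ 1 p 1 q] by (intro poly_eqI) (simp add: coeff_T eI)
  moreover have "T (smult c p) = smult c (T p)" for c p
    using lin[of _ c p 0 0] by (intro poly_eqI) (simp add: coeff_T eI)
  ultimately have "Vector_Spaces.linear smult smult T"
    unfolding Vector_Spaces.linear_iff using poly_vs.vector_space_axioms by blast
  moreover have "T ` {q. degree q \<le> n} \<subseteq> {q. degree q \<le> n}"
    by (auto intro: degree_le simp: coeff_T)
  moreover have "inj_on T {q. degree q \<le> n}"
    using unique by (auto intro: inj_onI simp: T_eq_iff)
  ultimately have surj: "T ` {q. degree q \<le> n} = {q. degree q \<le> n}"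
    using poly_vs.linear_inj_on_span_imp_surj_on[OF _ independent_monoms, of T "{..n}"]
    by (simp add: span_monoms)
  define B where "B = (\<Sum>j\<le>n. monom (b (e j)) j)"
  have coeff_B: "coeff B j = (if j \<le> n then b (e j) else 0)" for j
    unfolding B_def coeff_sum by (simp add: coeff_monom if_distrib cong: if_cong)
  have "degree B \<le> n"
    by (rule degree_le) (simp add: coeff_B)
  then have "B \<in> T ` {q. degree q \<le> n}"
    by (simp add: surj)
  then obtain q where q: "degree q \<le> n" "T q = B"
    by auto
  then have "\<forall>j\<le>n. L (e j) q = b (e j)"
    by (metis coeff_T coeff_B)
  then have "\<forall>i\<in>I. L i q = b i"
    unfolding e[symmetric] by auto
  with q(1) unique show ?thesis
    by (intro ex1I[of _ q]) auto
qed

section \<open>The conditions (J1)-(J3)\<close>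

lemma inP_iff: "inP s p \<longleftrightarrow> p = 0 \<or> int (degree p) \<le> s"
  by (auto simp: inP_def)

lemma inP_diff_iff: "k \<le> r \<Longrightarrow> inP (int r - int k) p \<longleftrightarrow> degree p \<le> r - k"
  by (auto simp: inP_iff)

definition J3_lhs :: "nat \<Rightarrow> ((real \<Rightarrow> real) \<Rightarrow> real) \<Rightarrow> real poly \<Rightarrow> real poly \<Rightarrow> real" where
  "J3_lhs k Iscr q \<phi> =
     Iscr (\<lambda>t. poly (pderiv q) t * poly \<phi> t) + (if k = 0 then poly q (-1) * poly \<phi> (-1) else 0)"

definition J3_rhs :: "nat \<Rightarrow> ((real \<Rightarrow> real) \<Rightarrow> real) \<Rightarrow> ((real \<Rightarrow> real) \<Rightarrow> (real \<Rightarrow> real)) \<Rightarrow>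
    (real \<Rightarrow> real) \<Rightarrow> real poly \<Rightarrow> real" where
  "J3_rhs k Iscr Ical v \<phi> =
     Iscr (\<lambda>t. Ical (cdiff 1 v) t * poly \<phi> t) + (if k = 0 then v (-1) * poly \<phi> (-1) else 0)"

lemma J_conds_iff:
  assumes "k \<le> r"
  shows "J_conds r k Iscr Ical v q \<longleftrightarrow>
    (\<forall>i<(k + 1) div 2. poly ((pderiv ^^ i) q) (-1) = cdiff i v (-1)) \<and>
    (\<forall>i\<in>{1..k div 2}. poly ((pderiv ^^ i) q) 1 = cdiff i v 1) \<and>
    (\<forall>\<phi>. degree \<phi> \<le> r - k \<longrightarrow> J3_lhs k Iscr q \<phi> = J3_rhs k Iscr Ical v \<phi>)"
proof -
  have "(1 \<le> k \<longrightarrow> (\<forall>i\<le>(k - 1) div 2. P i)) \<longleftrightarrow> (\<forall>i<(k + 1) div 2. P i)" for P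
    by (cases k) (auto simp: less_Suc_eq_le)
  moreover have "(2 \<le> k \<longrightarrow> (\<forall>i\<in>{1..k div 2}. P i)) \<longleftrightarrow> (\<forall>i\<in>{1..k div 2}. P i)" for P
    by auto
  moreover have "inP (int r - int k) \<phi> \<longleftrightarrow> degree \<phi> \<le> r - k" for \<phi>
    using assms by (rule inP_diff_iff)
  ultimately show ?thesis
    unfolding J_conds_def J3_lhs_def J3_rhs_def by presburger
qed

text \<open>(J1)-(J3) as r + 1 scalar equations, with (J3) tested only against monomials.\<close>

datatype J_dof = Deriv_at_minus_one nat | Deriv_at_one nat | Moment nat

definition J_dofs :: "nat \<Rightarrow> nat \<Rightarrow> J_dof set" where
  "J_dofs r k =
     Deriv_at_minus_one ` {..<(k + 1) div 2} \<union> Deriv_at_one ` {1..k div 2} \<union> Moment ` {..r - k}"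

fun J_dof_lhs :: "nat \<Rightarrow> ((real \<Rightarrow> real) \<Rightarrow> real) \<Rightarrow> J_dof \<Rightarrow> real poly \<Rightarrow> real" where
  "J_dof_lhs k Iscr (Deriv_at_minus_one i) q = poly ((pderiv ^^ i) q) (-1)"
| "J_dof_lhs k Iscr (Deriv_at_one i) q = poly ((pderiv ^^ i) q) 1"
| "J_dof_lhs k Iscr (Moment j) q = J3_lhs k Iscr q (monom 1 j)"

fun J_dof_rhs :: "nat \<Rightarrow> ((real \<Rightarrow> real) \<Rightarrow> real) \<Rightarrow> ((real \<Rightarrow> real) \<Rightarrow> (real \<Rightarrow> real)) \<Rightarrow>
    J_dof \<Rightarrow> (real \<Rightarrow> real) \<Rightarrow> real" where
  "J_dof_rhs k Iscr Ical (Deriv_at_minus_one i) v = cdiff i v (-1)"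
| "J_dof_rhs k Iscr Ical (Deriv_at_one i) v = cdiff i v 1"
| "J_dof_rhs k Iscr Ical (Moment j) v = J3_rhs k Iscr Ical v (monom 1 j)"

lemma ball_J_dofs:
  "(\<forall>d\<in>J_dofs r k. P d) \<longleftrightarrow>
    (\<forall>i<(k + 1) div 2. P (Deriv_at_minus_one i)) \<and> (\<forall>i\<in>{1..k div 2}. P (Deriv_at_one i)) \<and>
    (\<forall>j\<le>r - k. P (Moment j))"
  by (auto simp: J_dofs_def)

lemma finite_J_dofs: "finite (J_dofs r k)"
  by (simp add: J_dofs_def)

lemma card_J_dofs:
  assumes "k \<le> r"
  shows "card (J_dofs r k) = Suc r"
proof -
  have "card (Deriv_at_minus_one ` {..<(k + 1) div 2} \<union> Deriv_at_one ` {1..k div 2}) =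
      (k + 1) div 2 + k div 2"
    by (subst card_Un_disjoint) (auto simp: card_image inj_on_def)
  then have "card (J_dofs r k) = (k + 1) div 2 + k div 2 + (r - k + 1)"
    unfolding J_dofs_def by (subst card_Un_disjoint) (auto simp: card_image inj_on_def)
  with assms show ?thesis
    by linarith
qed

section \<open>Unisolvence\<close>

lemma J_homogeneous_eq_0_k_pos:
  assumes A1: "A1 r k Iscr" and k: "1 \<le> k" "k \<le> r" and dq: "degree q \<le> r"
    and left: "\<forall>i<(k + 1) div 2. poly ((pderiv ^^ i) q) (-1) = 0"
    and right: "\<forall>i\<in>{1..k div 2}. poly ((pderiv ^^ i) q) 1 = 0"
    and moments: "\<forall>\<phi>. degree \<phi> \<le> r - k \<longrightarrow> J3_lhs k Iscr q \<phi> = 0"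
  shows "q = 0"
proof -
  have left': "\<forall>i\<in>{1..(k - 1) div 2}. poly ((pderiv ^^ i) q) (-1) = 0"
    using left k by auto
  obtain \<psi> where
      \<psi>: "\<And>t. poly (pderiv q) t = (1 - t) ^ (k div 2) * (1 + t) ^ ((k - 1) div 2) * poly \<psi> t"
    and deg: "\<psi> = 0 \<or> degree (pderiv q) = (k - 1) div 2 + k div 2 + degree \<psi>"
    using pderiv_factor_by_vanishing_derivatives[OF left' right] by blast
  have "(k - 1) div 2 + k div 2 = k - 1"
    using k by presburger
  then have "degree \<psi> \<le> r - k"
    using deg dq k by (auto simp: degree_pderiv)
  moreover have "Iscr (\<lambda>t. (1 - t) ^ (k div 2) * (1 + t) ^ absfl k * poly \<psi> t * poly \<phi> t) = 0"
    if "degree \<phi> \<le> r - k" for \<phi>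
    using moments that k by (simp add: J3_lhs_def absfl_def \<psi>)
  moreover have "max 1 k = k"
    using k by simp
  ultimately have "\<psi> = 0"
    using A1 k unfolding A1_def by (simp add: inP_diff_iff)
  then have "pderiv q = 0"
    using \<psi> poly_all_0_iff_0 by auto
  moreover have "poly q (-1) = 0"
    using left k by force
  ultimately show ?thesis
    by (rule pderiv_eq_0_root_imp_eq_0)
qed

locale reference_integrator =
  fixes kI :: nat and Iscr :: "(real \<Rightarrow> real) \<Rightarrow> real"
  assumes Iscr_lin: "\<And>f g a b. Ck kI f \<Longrightarrow> Ck kI g \<Longrightarrow>
    Iscr (\<lambda>x. a * f x + b * g x) = a * Iscr f + b * Iscr g"
begin

lemma Iscr_zero: "Iscr (\<lambda>_. 0) = 0"
  using Iscr_lin[OF Ck_poly Ck_poly, of 0 0 0 0] by simp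

lemma Iscr_mult_poly_linear:
  assumes "Ck kI f"
  shows "Iscr (\<lambda>t. f t * poly (smult a \<phi> + smult b \<psi>) t) =
    a * Iscr (\<lambda>t. f t * poly \<phi> t) + b * Iscr (\<lambda>t. f t * poly \<psi> t)"
proof -
  have "(\<lambda>t. f t * poly (smult a \<phi> + smult b \<psi>) t) = (\<lambda>t. a * (f t * poly \<phi> t) + b * (f t * poly \<psi> t))"
    by (simp add: fun_eq_iff algebra_simps)
  then show ?thesis
    using Iscr_lin[OF Ck_mult_poly[OF assms] Ck_mult_poly[OF assms]] by simp
qed

lemma J3_lhs_linear_test:
  "J3_lhs k Iscr q (smult a \<phi> + smult b \<psi>) = a * J3_lhs k Iscr q \<phi> + b * J3_lhs k Iscr q \<psi>"
  unfolding J3_lhs_def Iscr_mult_poly_linear[OF Ck_poly] by (simp add: algebra_simps)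

lemma J3_rhs_linear_test:
  assumes "Ck kI (Ical (cdiff 1 v))"
  shows "J3_rhs k Iscr Ical v (smult a \<phi> + smult b \<psi>) =
    a * J3_rhs k Iscr Ical v \<phi> + b * J3_rhs k Iscr Ical v \<psi>"
  unfolding J3_rhs_def Iscr_mult_poly_linear[OF assms] by (simp add: algebra_simps)

lemma J3_lhs_linear:
  "J3_lhs k Iscr (smult a p + smult b q) \<phi> = a * J3_lhs k Iscr p \<phi> + b * J3_lhs k Iscr q \<phi>"
proof -
  have "(\<lambda>t. poly (pderiv (smult a p + smult b q)) t * poly \<phi> t) =
      (\<lambda>t. a * (poly (pderiv p) t * poly \<phi> t) + b * (poly (pderiv q) t * poly \<phi> t))"
    by (simp add: fun_eq_iff pderiv_add pderiv_smult algebra_simps)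
  then show ?thesis
    using Iscr_lin[OF Ck_mult_poly[OF Ck_poly] Ck_mult_poly[OF Ck_poly]]
    by (simp add: J3_lhs_def algebra_simps)
qed

lemma J_dof_lhs_linear:
  "J_dof_lhs k Iscr d (smult a p + smult b q) = a * J_dof_lhs k Iscr d p + b * J_dof_lhs k Iscr d q"
  by (cases d) (simp_all add: higher_pderiv_add higher_pderiv_smult J3_lhs_linear)

lemma J_conds_iff_dofs:
  assumes "k \<le> r" and "Ck kI (Ical (cdiff 1 v))"
  shows "J_conds r k Iscr Ical v q \<longleftrightarrow>
    (\<forall>d\<in>J_dofs r k. J_dof_lhs k Iscr d q = J_dof_rhs k Iscr Ical d v)"
  unfolding J_conds_iff[OF assms(1)]
    linear_functional_eq_on_degree_le_iff_monoms[OF J3_lhs_linear_test J3_rhs_linear_test[of Ical v, OF assms(2)]]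
  by (simp add: ball_J_dofs)

lemma J_homogeneous_eq_0_k_0:
  assumes A1: "A1 r 0 Iscr" and dq: "degree q \<le> r"
    and moments: "\<forall>\<phi>. degree \<phi> \<le> r \<longrightarrow> J3_lhs 0 Iscr q \<phi> = 0"
  shows "q = 0"
proof -
  have "Iscr (\<lambda>t. (1 + t) * poly (pderiv q) t * poly \<phi> t) = 0" if "inP (int r - 1) \<phi>" for \<phi>
  proof -
    have "degree ([:1, 1:] * \<phi>) \<le> r"
      using that degree_mult_le[of "[:1, 1:]" \<phi>] by (auto simp: inP_iff simp del: mult_pCons_left)
    then have "J3_lhs 0 Iscr q ([:1, 1:] * \<phi>) = 0"
      using moments by blast
    moreover have "(\<lambda>t. poly (pderiv q) t * poly ([:1, 1:] * \<phi>) t) =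
        (\<lambda>t. (1 + t) * poly (pderiv q) t * poly \<phi> t)"
      by (simp add: fun_eq_iff algebra_simps)
    ultimately show ?thesis
      by (simp add: J3_lhs_def)
  qed
  moreover have "inP (int r - 1) (pderiv q)"
    using dq by (auto simp: inP_iff degree_pderiv pderiv_eq_0_iff)
  ultimately have "pderiv q = 0"
    using A1 unfolding A1_def absfl_def by auto
  moreover have "J3_lhs 0 Iscr q 1 = 0"
    using moments by simp
  ultimately have "poly q (-1) = 0"
    by (simp add: J3_lhs_def Iscr_zero)
  with \<open>pderiv q = 0\<close> show ?thesis
    by (rule pderiv_eq_0_root_imp_eq_0)
qed

lemma J_dofs_kernel:
  assumes A1: "A1 r k Iscr" and "k \<le> r" "degree q \<le> r"
    and zero: "\<forall>d\<in>J_dofs r k. J_dof_lhs k Iscr d q = 0"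
  shows "q = 0"
proof -
  have left: "\<forall>i<(k + 1) div 2. poly ((pderiv ^^ i) q) (-1) = 0"
    and right: "\<forall>i\<in>{1..k div 2}. poly ((pderiv ^^ i) q) 1 = 0"
    and "\<forall>j\<le>r - k. J3_lhs k Iscr q (monom 1 j) = 0"
    using zero by (simp_all add: ball_J_dofs)
  then have "\<forall>\<phi>. degree \<phi> \<le> r - k \<longrightarrow> J3_lhs k Iscr q \<phi> = 0"
    using linear_functional_eq_on_degree_le_iff_monoms[of "J3_lhs k Iscr q" "\<lambda>_. 0" "r - k"]
      J3_lhs_linear_test
    by simp
  with left right show ?thesis
    using assms J_homogeneous_eq_0_k_0 J_homogeneous_eq_0_k_pos[of r k Iscr q]
    by (cases "k = 0") auto
qed

lemma J_conds_unique_solution: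
  assumes "A1 r k Iscr" and "k \<le> r" and "Ck kI (Ical (cdiff 1 v))"
  shows "\<exists>!q. degree q \<le> r \<and> J_conds r k Iscr Ical v q"
  using square_linear_system_unique_solution[where L = "J_dof_lhs k Iscr"
      and b = "\<lambda>d. J_dof_rhs k Iscr Ical d v",
      OF finite_J_dofs card_J_dofs[OF assms(2)] J_dof_lhs_linear J_dofs_kernel[OF assms(1,2)]]
  by (simp add: J_conds_iff_dofs[of k r Ical v, OF assms(2,3)])

end

theorem mainTheorem1:
  fixes r k kI kcI :: nat
    and Iscr :: "(real \<Rightarrow> real) \<Rightarrow> real"
    and Ical :: "(real \<Rightarrow> real) \<Rightarrow> (real \<Rightarrow> real)"
  assumes kr: "k \<le> r"
    and Iscr_lin: "\<And>f g a b. Ck kI f \<Longrightarrow> Ck kI g \<Longrightarrow>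
        Iscr (\<lambda>x. a * f x + b * g x) = a * Iscr f + b * Iscr g"
    and Iscr_loc: "\<And>f g. Ck kI f \<Longrightarrow> Ck kI g \<Longrightarrow> (\<forall>x\<in>{-1..1}. f x = g x) \<Longrightarrow> Iscr f = Iscr g"
    and Ical_lin: "\<And>f g a b. Ck kcI f \<Longrightarrow> Ck kcI g \<Longrightarrow>
        \<forall>x\<in>{-1..1}. Ical (\<lambda>y. a * f y + b * g y) x = a * Ical f x + b * Ical g x"
    and Ical_loc: "\<And>f g. Ck kcI f \<Longrightarrow> Ck kcI g \<Longrightarrow> (\<forall>x\<in>{-1..1}. f x = g x) \<Longrightarrow>
        \<forall>x\<in>{-1..1}. Ical f x = Ical g x"
    and Ical_reg: "\<And>l v. Ck (max kcI l) v \<Longrightarrow> Ck l (Ical v)"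
    and A1: "A1 r k Iscr"
  shows "(\<forall>v. Ck (max (k div 2 - 1) (max kI kcI) + 1) v \<longrightarrow>
            (\<exists>!q. degree q \<le> r \<and> J_conds r k Iscr Ical v q))
       \<and> (\<forall>rt::nat. (\<forall>p. degree p \<le> rt \<longrightarrow> (\<forall>x\<in>{-1..1}. Ical (poly p) x = poly p x)) \<longrightarrow>
            (\<forall>p. degree p \<le> min (rt + 1) r \<longrightarrow> Jhat r k Iscr Ical (poly p) = p))"
proof -
  interpret reference_integrator kI Iscr
    by unfold_locales (fact Iscr_lin)
  have unique: "\<exists>!q. degree q \<le> r \<and> J_conds r k Iscr Ical v q" if "Ck (Suc (max kcI kI)) v" for v
    using J_conds_unique_solution[where Ical = Ical and v = v, OF A1 kr Ical_reg[OF Ck_cdiff_1[OF that]]] .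
  have part1: "\<exists>!q. degree q \<le> r \<and> J_conds r k Iscr Ical v q"
    if "Ck (max (k div 2 - 1) (max kI kcI) + 1) v" for v
    using that by (intro unique) (rule Ck_mono, auto)
  have part2: "Jhat r k Iscr Ical (poly p) = p"
    if pres: "\<forall>p. degree p \<le> rt \<longrightarrow> (\<forall>x\<in>{-1..1}. Ical (poly p) x = poly p x)"
      and dp: "degree p \<le> min (rt + 1) r" for rt p
  proof -
    have "\<forall>x\<in>{-1..1}. Ical (cdiff 1 (poly p)) x = Ical (poly (pderiv p)) x"
      by (rule Ical_loc[OF Ck_cdiff_1[OF Ck_poly] Ck_poly]) (simp add: cdiff_poly)
    moreover have "degree (pderiv p) \<le> rt"
      using dp by (simp add: degree_pderiv, linarith)
    ultimately have "\<forall>x\<in>{-1..1}. Ical (cdiff 1 (poly p)) x = poly (pderiv p) x"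
      using pres by simp
    then have "Iscr (\<lambda>t. Ical (cdiff 1 (poly p)) t * poly \<phi> t) = Iscr (\<lambda>t. poly (pderiv p) t * poly \<phi> t)" for \<phi>
      by (intro Iscr_loc Ck_mult_poly Ical_reg Ck_poly Ck_cdiff_1) auto
    then have "J_conds r k Iscr Ical (poly p) p"
      by (simp add: J_conds_def cdiff_poly)
    with dp show ?thesis
      unfolding Jhat_def by (intro the1_equality unique Ck_poly) simp
  qed
  from part1 part2 show ?thesis
    by blast
qed

end
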